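(* For any sequence $1>r_1>r_2>\cdots$ decreasing to $0$, there is a distribution $\boldsymbol{\mu}\in\Delta_\mathbb{N}$ such that $2\,\mathbb{E}_{\boldsymbol{X}\sim\boldsymbol{\mu}^m}\|\boldsymbol{\mu}-\widehat{\boldsymbol{\mu}}_m\|_{TV}>r_m$ for all $m\ge1$.
   Context: $\Delta_\mathbb{N}$ is the set of probability distributions on $\mathbb{N}=\{1,2,\dots\}$. $\widehat{\boldsymbol{\mu}}_m(i)=\frac1m\sum_{t=1}^m\mathbb{I}\{X_t=i\}$ for $\boldsymbol{X}=(X_1,\dots,X_m)$. $\|\boldsymbol{\mu}-\boldsymbol{\nu}\|_{TV}=\frac12\sum_i|\boldsymbol{\mu}(i)-\boldsymbol{\nu}(i)|$. *)

theory Defs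
  imports "HOL-Probability.Probability"
begin

definition emp_dist :: "nat \<Rightarrow> (nat \<Rightarrow> nat) \<Rightarrow> nat \<Rightarrow> real" where
  "emp_dist m X i = (1 / real m) * real (card {t \<in> {1..m}. X t = i})"

definition tv_dist :: "nat pmf \<Rightarrow> (nat \<Rightarrow> real) \<Rightarrow> real" where
  "tv_dist \<mu> \<nu> = (1/2) * (\<Sum>\<^sub>\<infinity>i\<in>{1::nat..}. \<bar>pmf \<mu> i - \<nu> i\<bar>)"

text \<open>m i.i.d. samples from mu, as a pmf on functions {1..m} -> N (value 0 outside).\<close>
definition sample_pmf :: "nat pmf \<Rightarrow> nat \<Rightarrow> (nat \<Rightarrow> nat) pmf" where
  "sample_pmf \<mu> m = Pi_pmf {1..m} 0 (\<lambda>_. \<mu>)"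

end

theory Submission
  imports Defs
begin

text \<open>
  An atom \<open>i\<close> that does not occur in the sample contributes \<open>\<mu>(i)\<close> to \<open>2 \<parallel>\<mu> - \<mu>\<^sub>m\<parallel>\<^sub>T\<^sub>V\<close>,
  so \<open>2 E \<parallel>\<mu> - \<mu>\<^sub>m\<parallel>\<^sub>T\<^sub>V \<ge> \<Sum>\<^sub>i \<mu>(i) (1 - \<mu>(i))\<^sup>m\<close>. Spread mass \<open>2\<^sup>-\<^sup>k\<^sup>-\<^sup>1\<close> uniformly over
  \<open>N\<^sub>k\<close> atoms; if \<open>N\<^sub>k \<ge> C m\<close>, Bernoulli's inequality shows that block \<open>k\<close> keeps a fraction
  \<open>1 - 1/C\<close> of its mass in this sum. Since \<open>r\<^sub>m \<rightarrow> 0\<close>, the block sizes can be chosen so that for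
  every \<open>m\<close> all blocks from some \<open>K\<close> on are large compared with \<open>m\<close>, while \<open>r\<^sub>m\<close> is still below a
  fixed fraction of their total mass \<open>2\<^sup>-\<^sup>K\<close>.
\<close>

lemma emp_dist_nonneg: "emp_dist m X i \<ge> 0"
  by (simp add: emp_dist_def)

lemma emp_dist_le_1: "emp_dist m X i \<le> 1"
proof (cases "m = 0")
  case False
  have "card {t \<in> {1..m}. X t = i} \<le> card {1..m}"
    by (intro card_mono) auto
  then show ?thesis
    using False by (simp add: emp_dist_def field_simps)
qed (simp add: emp_dist_def)

lemma emp_dist_eq_0: "i \<notin> X ` {1..m} \<Longrightarrow> emp_dist m X i = 0"
  by (auto simp: emp_dist_def)

lemma emp_dist_summable_on: "emp_dist m X summable_on A"
proof -
  have "emp_dist m X summable_on A \<longleftrightarrow> emp_dist m X summable_on (A \<inter> X ` {1..m})"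
    by (intro summable_on_cong_neutral) (auto simp: emp_dist_eq_0)
  then show ?thesis
    by simp
qed

lemma infsum_emp_dist_le: "infsum (emp_dist m X) A \<le> real m"
proof -
  have "infsum (emp_dist m X) A = infsum (emp_dist m X) (A \<inter> X ` {1..m})"
    by (intro infsum_cong_neutral) (auto simp: emp_dist_eq_0)
  also have "\<dots> = sum (emp_dist m X) (A \<inter> X ` {1..m})"
    by simp
  also have "\<dots> \<le> (\<Sum>i\<in>A \<inter> X ` {1..m}. 1)"
    by (intro sum_mono emp_dist_le_1)
  also have "\<dots> = real (card (A \<inter> X ` {1..m}))"
    by simp
  also have "card (A \<inter> X ` {1..m}) \<le> card (X ` {1..m})"
    by (intro card_mono) auto
  also have "card (X ` {1..m}) \<le> m"
    using card_image_le[of "{1..m}" X] by simp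
  finally show ?thesis
    by simp
qed

lemma pmf_summable_on: "pmf p summable_on A"
  using abs_summable_equivalent[of "pmf p" A] pmf_abs_summable by simp

lemma infsum_pmf_le_1: "infsum (pmf p) A \<le> 1"
  using measure_pmf.prob_le_1[of p A]
  by (simp add: measure_pmf_conv_infsetsum infsetsum_infsum pmf_abs_summable)

lemma abs_pmf_minus_emp_dist_le: "\<bar>pmf p i - emp_dist m X i\<bar> \<le> pmf p i + emp_dist m X i"
  using pmf_nonneg[of p i] emp_dist_nonneg[of m X i] by linarith

lemma tv_dist_emp_summable_on: "(\<lambda>i. \<bar>pmf p i - emp_dist m X i\<bar>) summable_on A"
proof (rule summable_on_comparison_test)
  show "(\<lambda>i. pmf p i + emp_dist m X i) summable_on A"
    by (intro summable_on_add pmf_summable_on emp_dist_summable_on)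
qed (simp_all add: abs_pmf_minus_emp_dist_le)

lemma tv_dist_emp_nonneg: "tv_dist p (emp_dist m X) \<ge> 0"
  unfolding tv_dist_def by (intro mult_nonneg_nonneg infsum_nonneg) auto

lemma tv_dist_emp_le: "tv_dist p (emp_dist m X) \<le> (1 + real m) / 2"
proof -
  have "infsum (\<lambda>i. \<bar>pmf p i - emp_dist m X i\<bar>) {1..}
          \<le> infsum (\<lambda>i. pmf p i + emp_dist m X i) {1..}"
    by (intro infsum_mono tv_dist_emp_summable_on summable_on_add pmf_summable_on
          emp_dist_summable_on abs_pmf_minus_emp_dist_le)
  also have "\<dots> = infsum (pmf p) {1..} + infsum (emp_dist m X) {1..}"
    by (intro infsum_add pmf_summable_on emp_dist_summable_on)
  also have "\<dots> \<le> 1 + real m"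
    using infsum_pmf_le_1 infsum_emp_dist_le by (rule add_mono)
  finally show ?thesis
    unfolding tv_dist_def by simp
qed

lemma unseen_atoms_le_tv_dist_emp:
  assumes "finite F" "F \<subseteq> {1..}"
  shows "(\<Sum>i\<in>F. pmf p i * indicator {X. \<forall>t\<in>{1..m}. X t \<noteq> i} X)
           \<le> 2 * tv_dist p (emp_dist m X)"
proof -
  have "(\<Sum>i\<in>F. pmf p i * indicator {X. \<forall>t\<in>{1..m}. X t \<noteq> i} X)
          \<le> (\<Sum>i\<in>F. \<bar>pmf p i - emp_dist m X i\<bar>)"
  proof (intro sum_mono)
    fix i
    show "pmf p i * indicator {X. \<forall>t\<in>{1..m}. X t \<noteq> i} X \<le> \<bar>pmf p i - emp_dist m X i\<bar>"
    proof (cases "\<forall>t\<in>{1..m}. X t \<noteq> i")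
      case True
      then have "emp_dist m X i = 0"
        by (intro emp_dist_eq_0) auto
      with True show ?thesis
        by simp
    qed simp
  qed
  also have "\<dots> = infsum (\<lambda>i. \<bar>pmf p i - emp_dist m X i\<bar>) F"
    using assms(1) by simp
  also have "\<dots> \<le> infsum (\<lambda>i. \<bar>pmf p i - emp_dist m X i\<bar>) {1..}"
    using assms(2) by (intro infsum_mono_neutral tv_dist_emp_summable_on) auto
  finally show ?thesis
    unfolding tv_dist_def by simp
qed

lemma prob_sample_avoids:
  "measure_pmf.prob (sample_pmf p m) {X. \<forall>t\<in>{1..m}. X t \<noteq> i} = (1 - pmf p i) ^ m"
proof -
  have "{X. \<forall>t\<in>{1..m}. X t \<noteq> i} = Pi {1..m} (\<lambda>_. UNIV - {i})"
    by (auto simp: Pi_def)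
  then have "measure_pmf.prob (sample_pmf p m) {X. \<forall>t\<in>{1..m}. X t \<noteq> i}
               = (\<Prod>t\<in>{1..m}. measure_pmf.prob p (UNIV - {i}))"
    unfolding sample_pmf_def by (simp add: measure_Pi_pmf_Pi)
  also have "measure_pmf.prob p (UNIV - {i}) = 1 - pmf p i"
    using measure_pmf.prob_compl[of "{i}" p] by (simp add: measure_pmf_single)
  finally show ?thesis
    by simp
qed

lemma unseen_mass_le_expected_tv_dist:
  assumes "finite F" "F \<subseteq> {1..}"
  shows "(\<Sum>i\<in>F. pmf p i * (1 - pmf p i) ^ m)
           \<le> 2 * measure_pmf.expectation (sample_pmf p m) (\<lambda>X. tv_dist p (emp_dist m X))"
proof -
  let ?S = "measure_pmf (sample_pmf p m)"
  let ?unseen = "\<lambda>i. {X. \<forall>t\<in>{1..m}. X t \<noteq> i}"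
  have integrable_tv: "integrable ?S (\<lambda>X. tv_dist p (emp_dist m X))"
    by (rule measure_pmf.integrable_const_bound[where B = "(1 + real m) / 2"])
       (use tv_dist_emp_le tv_dist_emp_nonneg in \<open>auto simp: abs_of_nonneg\<close>)
  have integrable_indicator: "integrable ?S (indicator A :: _ \<Rightarrow> real)" for A
    by (intro integrable_real_indicator) (auto simp: measure_pmf.emeasure_finite less_top[symmetric])
  have integrable_unseen: "integrable ?S (\<lambda>X. \<Sum>i\<in>F. pmf p i * indicator (?unseen i) X)"
    by (intro Bochner_Integration.integrable_sum integrable_mult_right integrable_indicator)
  have "(\<Sum>i\<in>F. pmf p i * (1 - pmf p i) ^ m) = (\<Sum>i\<in>F. pmf p i * measure ?S (?unseen i))"
    by (simp only: prob_sample_avoids)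
  also have "\<dots> = integral\<^sup>L ?S (\<lambda>X. \<Sum>i\<in>F. pmf p i * indicator (?unseen i) X)"
    by (subst Bochner_Integration.integral_sum) (auto simp: integrable_indicator simp del: indicator_simps)
  also have "\<dots> \<le> integral\<^sup>L ?S (\<lambda>X. 2 * tv_dist p (emp_dist m X))"
    by (intro integral_mono integrable_unseen integrable_mult_right integrable_tv
          unseen_atoms_le_tv_dist_emp assms)
  finally show ?thesis
    by simp
qed

definition block_pmf :: "(nat \<Rightarrow> nat) \<Rightarrow> nat pmf" where
  "block_pmf N = map_pmf (\<lambda>kj. Suc (prod_encode kj))
     (geometric_pmf (1/2) \<bind> (\<lambda>k. map_pmf (Pair k) (pmf_of_set {..<N k})))"

lemma set_block_pmf: "set_pmf (block_pmf N) \<subseteq> {1..}"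
  by (auto simp: block_pmf_def)

lemma pmf_block_pmf:
  assumes "j < N k"
  shows "pmf (block_pmf N) (Suc (prod_encode (k, j))) = (1/2) ^ Suc k / real (N k)"
proof -
  have inj: "inj (\<lambda>kj. Suc (prod_encode kj))"
    by (intro injI) (simp add: prod_encode_eq)
  have "pmf (pmf_of_set {..<N k}) j = 1 / real (N k)"
    using assms by (subst pmf_of_set) auto
  then have "pmf (map_pmf (Pair y) (pmf_of_set {..<N y})) (k, j) = indicator {k} y / real (N k)" for y
    by (cases "y = k") (auto simp: pmf_map vimage_def measure_pmf_single)
  then have "pmf (geometric_pmf (1/2) \<bind> (\<lambda>k. map_pmf (Pair k) (pmf_of_set {..<N k}))) (k, j)
               = pmf (geometric_pmf (1/2)) k / real (N k)"
    by (simp add: pmf_bind measure_pmf_single)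
  then show ?thesis
    unfolding block_pmf_def using pmf_map_inj'[OF inj, of _ "(k, j)"] by (simp add: pmf_geometric)
qed

lemma split_mass_unseen_ge:
  fixes w C :: real
  assumes "0 \<le> w" "w \<le> 1" "n > 0" "C > 0" "C * real m \<le> real n"
  shows "(1 - 1/C) * w \<le> real n * (w / n * (1 - w / n) ^ m)"
proof -
  have "0 \<le> w / n" "w / n \<le> 1"
    using assms by (auto simp: field_simps)
  then have "1 - real m * (w / n) \<le> (1 - w / n) ^ m"
    using Bernoulli_inequality[of "- (w / n)" m] by simp
  moreover have "real m * (w / n) \<le> real m / n"
    using assms(2) by (simp add: divide_right_mono mult_left_le)
  moreover have "real m / n \<le> 1 / C"
    using assms(3-5) by (simp add: field_simps)
  ultimately have "1 - 1/C \<le> (1 - w / n) ^ m"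
    by linarith
  then have "(1 - 1/C) * w \<le> (1 - w / n) ^ m * w"
    using assms(1) by (rule mult_right_mono)
  also have "\<dots> = real n * (w / n * (1 - w / n) ^ m)"
    using assms(3) by simp
  finally show ?thesis .
qed

lemma expected_tv_dist_block_pmf_ge:
  fixes C :: real
  assumes "finite Ks" "C > 0"
    and "\<And>k. k \<in> Ks \<Longrightarrow> N k > 0" "\<And>k. k \<in> Ks \<Longrightarrow> C * real m \<le> real (N k)"
  shows "(1 - 1/C) * (\<Sum>k\<in>Ks. (1/2) ^ Suc k)
           \<le> 2 * measure_pmf.expectation (sample_pmf (block_pmf N) m)
                   (\<lambda>X. tv_dist (block_pmf N) (emp_dist m X))"
proof -
  let ?atom = "\<lambda>kj. Suc (prod_encode kj)"
  let ?atoms = "SIGMA k:Ks. {..<N k}"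
  let ?unseen = "\<lambda>i. pmf (block_pmf N) i * (1 - pmf (block_pmf N) i) ^ m"
  let ?block = "\<lambda>k. real (N k) * ((1/2) ^ Suc k / N k * (1 - (1/2) ^ Suc k / N k) ^ m)"
  have "(1 - 1/C) * (\<Sum>k\<in>Ks. (1/2) ^ Suc k) \<le> (\<Sum>k\<in>Ks. ?block k)"
    unfolding sum_distrib_left
  proof (intro sum_mono)
    fix k assume "k \<in> Ks"
    have "((1::real)/2) ^ Suc k \<le> 1"
      by (intro power_le_one) auto
    then show "(1 - 1/C) * (1/2) ^ Suc k \<le> ?block k"
      using assms(2-4) \<open>k \<in> Ks\<close> by (intro split_mass_unseen_ge) auto
  qed
  also have "\<dots> = (\<Sum>k\<in>Ks. \<Sum>j<N k. ?unseen (?atom (k, j)))"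
    by (intro sum.cong refl) (simp add: pmf_block_pmf)
  also have "\<dots> = (\<Sum>kj\<in>?atoms. ?unseen (?atom kj))"
    using assms(1) by (subst sum.Sigma) auto
  also have "\<dots> = sum ?unseen (?atom ` ?atoms)"
    by (subst sum.reindex) (auto simp: inj_on_def prod_encode_eq)
  also have "\<dots> \<le> 2 * measure_pmf.expectation (sample_pmf (block_pmf N) m)
                   (\<lambda>X. tv_dist (block_pmf N) (emp_dist m X))"
    using assms(1) by (intro unseen_mass_le_expected_tv_dist) auto
  finally show ?thesis .
qed

lemma sum_half_powers_atLeastLessThan: "(\<Sum>k\<in>{K..<K + n}. (1/2 :: real) ^ Suc k) = (1/2) ^ K * (1 - (1/2) ^ n)"
proof (induction n)
  case (Suc n)
  have "(\<Sum>k\<in>{K..<Suc (K + n)}. (1/2 :: real) ^ Suc k) = (1/2) ^ K * (1 - (1/2) ^ n) + (1/2) ^ Suc (K + n)"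
    by (simp only: sum.atLeastLessThan_Suc[OF le_add1] Suc.IH)
  also have "\<dots> = (1/2) ^ K * (1 - (1/2) ^ Suc n)"
    by (simp add: power_add field_simps)
  finally show ?case
    by simp
qed simp

lemma block_sizes_exist:
  fixes r :: "nat \<Rightarrow> real" and \<theta> C :: real
  assumes "r \<longlonglongrightarrow> 0" "\<theta> > 0" "C \<ge> 0" "\<And>m. m \<ge> 1 \<Longrightarrow> r m < \<theta>"
  obtains N :: "nat \<Rightarrow> nat" where "\<And>k. N k > 0"
    and "\<And>m. m \<ge> 1 \<Longrightarrow> \<exists>K. r m < \<theta> * (1/2) ^ K \<and> (\<forall>k\<ge>K. C * real m \<le> real (N k))"
proof -
  \<comment> \<open>\<open>K m\<close> is the last block level still above \<open>r m\<close>; capping it by \<open>m\<close> makes the maximum finite.\<close>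
  define K where "K m = Max {K. K \<le> m \<and> r m < \<theta> * (1/2) ^ K}" for m
  have r_below_K: "r m < \<theta> * (1/2) ^ K m" if "m \<ge> 1" for m
  proof -
    have "0 \<in> {K. K \<le> m \<and> r m < \<theta> * (1/2) ^ K}"
      using assms(4)[OF that] by simp
    then have "K m \<in> {K. K \<le> m \<and> r m < \<theta> * (1/2) ^ K}"
      unfolding K_def by (intro Max_in) (auto simp: finite_nat_set_iff_bounded_le)
    then show ?thesis
      by simp
  qed
  have "\<exists>B. \<forall>m\<ge>B. k < K m" for k
  proof -
    have "\<forall>\<^sub>F m in sequentially. r m < \<theta> * (1/2) ^ Suc k"
      using assms(1,2) by (intro order_tendstoD(2)) auto
    then obtain B where B: "\<And>m. m \<ge> B \<Longrightarrow> r m < \<theta> * (1/2) ^ Suc k"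
      by (auto simp: eventually_sequentially)
    have "k < K m" if "m \<ge> max B (Suc k)" for m
      unfolding K_def using B[of m] that
      by (intro Suc_le_lessD Max_ge) (auto simp: finite_nat_set_iff_bounded_le)
    then show ?thesis
      by blast
  qed
  then obtain B where B: "\<And>k m. m \<ge> B k \<Longrightarrow> k < K m"
    by metis
  show ?thesis
  proof (rule that[of "\<lambda>k. Suc (nat \<lceil>C * real (B k)\<rceil>)"])
    fix m :: nat assume "m \<ge> 1"
    have "C * real m \<le> real (Suc (nat \<lceil>C * real (B k)\<rceil>))" if "k \<ge> K m" for k
    proof -
      have "m < B k"
        using B[of k m] that by linarith
      then have "C * real m \<le> C * real (B k)"
        using assms(3) by (intro mult_left_mono) auto
      then show ?thesis
        by linarith
    qed
    then show "\<exists>K. r m < \<theta> * (1/2) ^ K \<and> (\<forall>k\<ge>K. C * real m \<le> real (Suc (nat \<lceil>C * real (B k)\<rceil>)))"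
      using r_below_K[OF \<open>m \<ge> 1\<close>] by blast
  qed simp
qed

lemma exists_half_power_margin:
  fixes x :: real
  assumes "x < 1"
  obtains n where "n > 0" "x < (1 - (1/2) ^ n) ^ 2"
proof -
  obtain n where n: "(1/2 :: real) ^ n < (1 - x) / 2"
    using real_arch_pow_inv[of "(1 - x) / 2" "1/2"] assms by auto
  have "(1/2 :: real) ^ Suc n \<le> (1/2) ^ n"
    by (intro power_decreasing) auto
  moreover have "1 - 2 * (1/2 :: real) ^ Suc n \<le> (1 - (1/2) ^ Suc n) ^ 2"
    unfolding power2_diff by simp
  ultimately have "x < (1 - (1/2) ^ Suc n) ^ 2"
    using n by argo
  then show ?thesis
    using that[of "Suc n"] by blast
qed

lemma block_pmf_beats_rate:
  fixes r :: "nat \<Rightarrow> real"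
  assumes "r \<longlonglongrightarrow> 0" "n > 0" "\<And>m. m \<ge> 1 \<Longrightarrow> r m < (1 - (1/2) ^ n) ^ 2"
  obtains N where "\<And>m. m \<ge> 1 \<Longrightarrow> r m < 2 * measure_pmf.expectation (sample_pmf (block_pmf N) m)
                                          (\<lambda>X. tv_dist (block_pmf N) (emp_dist m X))"
proof -
  define \<theta> :: real where "\<theta> = (1 - (1/2) ^ n) ^ 2"
  have "(1/2 :: real) ^ n < 1"
    using assms(2) by (simp add: power_less_one_iff)
  then have "\<theta> > 0"
    unfolding \<theta>_def by simp
  then obtain N where N: "\<And>k. N k > 0"
    and large: "\<And>m. m \<ge> 1 \<Longrightarrow> \<exists>K. r m < \<theta> * (1/2) ^ K \<and> (\<forall>k\<ge>K. 2 ^ n * real m \<le> real (N k))"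
    using block_sizes_exist[OF assms(1) _ _ assms(3), of "2 ^ n"] unfolding \<theta>_def by auto
  have "r m < 2 * measure_pmf.expectation (sample_pmf (block_pmf N) m)
                     (\<lambda>X. tv_dist (block_pmf N) (emp_dist m X))" if m: "m \<ge> 1" for m
  proof -
    obtain K where K: "r m < \<theta> * (1/2) ^ K" "\<forall>k\<ge>K. 2 ^ n * real m \<le> real (N k)"
      using large[OF m] by blast
    have "\<theta> * (1/2) ^ K = (1 - 1 / 2 ^ n) * (\<Sum>k\<in>{K..<K + n}. (1/2) ^ Suc k)"
      unfolding \<theta>_def sum_half_powers_atLeastLessThan by (simp add: power2_eq_square power_divide)
    also have "\<dots> \<le> 2 * measure_pmf.expectation (sample_pmf (block_pmf N) m)
                     (\<lambda>X. tv_dist (block_pmf N) (emp_dist m X))"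
      using N K(2) by (intro expected_tv_dist_block_pmf_ge) auto
    finally show ?thesis
      using K(1) by linarith
  qed
  then show ?thesis
    by (rule that)
qed

theorem proposition2:
  fixes r :: "nat \<Rightarrow> real"
  assumes "r 1 < 1"
    and "\<And>m. m \<ge> 1 \<Longrightarrow> r (Suc m) < r m"
    and "r \<longlonglongrightarrow> 0"
  shows "\<exists>\<mu> :: nat pmf. set_pmf \<mu> \<subseteq> {1..} \<and>
           (\<forall>m \<ge> 1. 2 * measure_pmf.expectation (sample_pmf \<mu> m)
                          (\<lambda>X. tv_dist \<mu> (emp_dist m X)) > r m)"
proof -
  have r_le_r1: "r m \<le> r 1" if "m \<ge> 1" for m
    using that
  proof (induction m rule: dec_induct)
    case (step m)
    then show ?case
      using assms(2)[of m] by linarith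
  qed simp
  obtain n where "n > 0" and margin: "r 1 < (1 - (1/2) ^ n) ^ 2"
    using exists_half_power_margin[OF assms(1)] by blast
  have "r m < (1 - (1/2) ^ n) ^ 2" if "m \<ge> 1" for m
    using r_le_r1[OF that] margin by linarith
  then obtain N where "\<And>m. m \<ge> 1 \<Longrightarrow> r m < 2 * measure_pmf.expectation (sample_pmf (block_pmf N) m)
                                            (\<lambda>X. tv_dist (block_pmf N) (emp_dist m X))"
    using block_pmf_beats_rate[OF assms(3) \<open>n > 0\<close>] by blast
  then show ?thesis
    using set_block_pmf by blast
qed

end
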